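(* Assume that $\sigma_1,\sigma_2:\mathbb{R}^d\to(0,\infty]$ satisfy \[ \inf_{x\in\mathbb{R}^d}\{\sigma_1(x),\sigma_2(x)\}>h>0,\qquad \|\sigma_1-\sigma_2\|_{L^\infty(\mathbb{R}^d)}\le M<\infty. \] Then there exists $C=C(d,h,M)$ such that \[ \|f\|_{\widetilde H^{1/2}_{\sigma_1}(\mathbb{R}^d)}\le C\|f\|_{\widetilde H^{1/2}_{\sigma_2}(\mathbb{R}^d)}\qquad\forall f\in\widetilde H^{1/2}_{\sigma_2}(\mathbb{R}^d). \]
   Context: For a lower semicontinuous $\Theta:\mathbb{R}^d\to(0,\infty]$, the screened Sobolev space is \[ \widetilde H^{1/2}_\Theta(\mathbb{R}^d)=\Big\{f\in\mathcal S'(\mathbb{R}^d)\cap L^2_{loc}(\mathbb{R}^d):\int_{\mathbb{R}^d}\int_{|k|<\Theta(x)}\frac{|f(x+k)-f(x)|^2}{|k|^{d+1}}\,dk\,dx<\infty\Big\}\Big/\mathbb{R}, \] with $\|f\|^2_{\widetilde H^{1/2}_\Theta}$ equal to the double integral. *)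

theory Defs
  imports "HOL-Analysis.Analysis"
begin

definition lsc_ereal :: "('a::topological_space \<Rightarrow> ereal) \<Rightarrow> bool" where
  "lsc_ereal \<Theta> \<longleftrightarrow> (\<forall>t::ereal. open {x. t < \<Theta> x})"

definition L2_loc :: "('a::euclidean_space \<Rightarrow> real) set" where
  "L2_loc = {f. f \<in> borel_measurable lborel \<and>
      (\<forall>K. compact K \<longrightarrow> (\<integral>\<^sup>+x\<in>K. ennreal ((f x)\<^sup>2) \<partial>lborel) < \<infinity>)}"

definition screened_sq :: "('a::euclidean_space \<Rightarrow> ereal) \<Rightarrow> ('a \<Rightarrow> real) \<Rightarrow> ennreal" where
  "screened_sq \<Theta> f =
     (\<integral>\<^sup>+x. (\<integral>\<^sup>+k. indicator {k. ereal (norm k) < \<Theta> x} k *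
         ennreal ((f (x + k) - f x)\<^sup>2 / norm k ^ (DIM('a) + 1)) \<partial>lborel) \<partial>lborel)"

definition screened_norm :: "('a::euclidean_space \<Rightarrow> ereal) \<Rightarrow> ('a \<Rightarrow> real) \<Rightarrow> ennreal" where
  "screened_norm \<Theta> f =
     (if screened_sq \<Theta> f = \<infinity> then \<infinity> else ennreal (sqrt (enn2real (screened_sq \<Theta> f))))"

text \<open>Membership in the screened space (representatives; the quotient by constants is
  immaterial since the seminorm is invariant under adding constants).\<close>
definition screened_space :: "('a::euclidean_space \<Rightarrow> ereal) \<Rightarrow> ('a \<Rightarrow> real) set" where
  "screened_space \<Theta> = {f. f \<in> L2_loc \<and> screened_sq \<Theta> f < \<infinity>}"

end

theory Submission
  imports Defs
begin

text \<open>Where \<open>\<sigma>1\<close> exceeds \<open>\<sigma>2\<close> it does so by at most \<open>M\<close>, so the \<open>\<sigma>1\<close>-energy of \<open>f\<close> is at most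
  its \<open>\<sigma>2\<close>-energy plus the energy of the annuli \<open>\<sigma>2 x \<le> |k| < \<sigma>2 x + M\<close>. For such \<open>k\<close> the
  lens \<open>B(x, \<sigma>2 x) \<inter> B(x + k, D)\<close>, \<open>D = |M| + 2h\<close>, contains a ball of radius \<open>h\<close>. Averaging
  \<open>|f(x+k) - f x|\<^sup>2 \<le> 2|f z - f x|\<^sup>2 + 2|f z - f(x+k)|\<^sup>2\<close> over that ball bounds the annulus
  energy by the \<open>\<sigma>2\<close>-energy near \<open>x\<close> plus the convolution of the integrable tail
  \<open>|k| ^ -(d + 1)\<close>, \<open>|k| \<ge> h\<close>, with the local energy \<open>y \<mapsto> \<integral>{|z - y| < D} |f z - f y|\<^sup>2 dz\<close>.
  The integral of the local energy is controlled by the energy at the scale \<open>h < \<sigma>2\<close>, because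
  the \<open>L\<^sup>2\<close> modulus \<open>G u = \<integral> |f(y + u) - f y|\<^sup>2 dy\<close> satisfies \<open>G(n u) \<le> n\<^sup>2 G u\<close>.\<close>

lemma nn_integral_lborel_translate:
  fixes g :: "'a::euclidean_space \<Rightarrow> ennreal"
  assumes [measurable]: "g \<in> borel_measurable borel"
  shows "(\<integral>\<^sup>+x. g (t + x) \<partial>lborel) = (\<integral>\<^sup>+x. g x \<partial>lborel)"
proof -
  have "(\<integral>\<^sup>+x. g x \<partial>lborel) = (\<integral>\<^sup>+x. g x \<partial>distr lborel borel ((+) t))"
    by (simp add: lborel_distr_plus)
  also have "\<dots> = (\<integral>\<^sup>+x. g (t + x) \<partial>lborel)"
    by (subst nn_integral_distr) auto
  finally show ?thesis ..
qed

lemma nn_integral_lborel_scale: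
  fixes g :: "'a::euclidean_space \<Rightarrow> ennreal"
  assumes [measurable]: "g \<in> borel_measurable borel" and "c > 0"
  shows "(\<integral>\<^sup>+x. g x \<partial>lborel) = ennreal (c ^ DIM('a)) * (\<integral>\<^sup>+x. g (c *\<^sub>R x) \<partial>lborel)"
proof -
  have "(\<integral>\<^sup>+x. g x \<partial>lborel)
      = (\<integral>\<^sup>+x. g x \<partial>density (distr lborel borel (\<lambda>x. 0 + c *\<^sub>R x)) (\<lambda>_. \<bar>c\<bar> ^ DIM('a)))"
    using lborel_affine[of c "0::'a"] \<open>c > 0\<close> by simp
  also have "\<dots> = (\<integral>\<^sup>+x. ennreal (c ^ DIM('a)) * g (c *\<^sub>R x) \<partial>lborel)"
    using \<open>c > 0\<close> by (simp add: nn_integral_density nn_integral_distr)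
  also have "\<dots> = ennreal (c ^ DIM('a)) * (\<integral>\<^sup>+x. g (c *\<^sub>R x) \<partial>lborel)"
    by (rule nn_integral_cmult) simp
  finally show ?thesis .
qed

lemma nn_integral_lborel_convolution:
  fixes W \<Phi> :: "'a::euclidean_space \<Rightarrow> ennreal"
  assumes [measurable]: "W \<in> borel_measurable borel" "\<Phi> \<in> borel_measurable borel"
  shows "(\<integral>\<^sup>+x. (\<integral>\<^sup>+k. W k * \<Phi> (x + k) \<partial>lborel) \<partial>lborel)
       = (\<integral>\<^sup>+k. W k \<partial>lborel) * (\<integral>\<^sup>+y. \<Phi> y \<partial>lborel)"
proof -
  have "(\<integral>\<^sup>+x. (\<integral>\<^sup>+k. W k * \<Phi> (x + k) \<partial>lborel) \<partial>lborel)
      = (\<integral>\<^sup>+k. (\<integral>\<^sup>+x. W k * \<Phi> (k + x) \<partial>lborel) \<partial>lborel)"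
    using lborel_pair.Fubini[of "\<lambda>(x, k). W k * \<Phi> (x + k)"] by (simp add: add.commute)
  also have "\<dots> = (\<integral>\<^sup>+k. W k * (\<integral>\<^sup>+y. \<Phi> y \<partial>lborel) \<partial>lborel)"
    by (simp add: nn_integral_cmult nn_integral_lborel_translate)
  also have "\<dots> = (\<integral>\<^sup>+k. W k \<partial>lborel) * (\<integral>\<^sup>+y. \<Phi> y \<partial>lborel)"
    by (rule nn_integral_multc) simp
  finally show ?thesis .
qed

lemma pred_mem_ball [measurable]:
  fixes c z :: "'b \<Rightarrow> 'a::euclidean_space"
  assumes [measurable]: "c \<in> borel_measurable M" "z \<in> borel_measurable M"
  shows "Measurable.pred M (\<lambda>w. z w \<in> ball (c w) r)"
  unfolding mem_ball by measurable

definition shift_energy :: "('a::euclidean_space \<Rightarrow> real) \<Rightarrow> 'a \<Rightarrow> ennreal" where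
  "shift_energy f u = (\<integral>\<^sup>+y. ennreal ((f (y + u) - f y)\<^sup>2) \<partial>lborel)"

lemma borel_measurable_shift_energy [measurable]:
  assumes [measurable]: "f \<in> borel_measurable borel"
  shows "shift_energy f \<in> borel_measurable borel"
  unfolding shift_energy_def by measurable

lemma shift_energy_zero [simp]: "shift_energy f 0 = 0"
  by (simp add: shift_energy_def)

lemma shift_energy_scaleR_nat:
  fixes f :: "'a::euclidean_space \<Rightarrow> real"
  assumes [measurable]: "f \<in> borel_measurable borel"
  shows "shift_energy f (real n *\<^sub>R u) \<le> of_nat (n\<^sup>2) * shift_energy f u"
proof -
  define step where "step y j = f (y + real (Suc j) *\<^sub>R u) - f (y + real j *\<^sub>R u)" for y j
  have [measurable]: "(\<lambda>y. step y j) \<in> borel_measurable borel" for j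
    unfolding step_def by measurable
  have telescope: "(f (y + real n *\<^sub>R u) - f y)\<^sup>2 \<le> real n * (\<Sum>j<n. (step y j)\<^sup>2)" for y
  proof -
    have "f (y + real n *\<^sub>R u) - f y = (\<Sum>j<n. step y j)"
      unfolding step_def by (subst sum_lessThan_telescope) simp
    then show ?thesis
      using sum_squared_le_sum_of_squares[of "step y" "{..<n}"] by (simp add: mult.commute)
  qed
  have step_energy: "(\<integral>\<^sup>+y. ennreal ((step y j)\<^sup>2) \<partial>lborel) = shift_energy f u" for j
    using nn_integral_lborel_translate[of "\<lambda>y. ennreal ((f (y + u) - f y)\<^sup>2)" "real j *\<^sub>R u"]
    unfolding step_def shift_energy_def by (simp add: algebra_simps)
  have "ennreal ((f (y + real n *\<^sub>R u) - f y)\<^sup>2) \<le> of_nat n * (\<Sum>j<n. ennreal ((step y j)\<^sup>2))" for y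
  proof -
    have "ennreal ((f (y + real n *\<^sub>R u) - f y)\<^sup>2) \<le> ennreal (real n * (\<Sum>j<n. (step y j)\<^sup>2))"
      using telescope by (rule ennreal_leI)
    then show ?thesis
      by (simp add: ennreal_mult' sum_ennreal ennreal_of_nat_eq_real_of_nat)
  qed
  then have "shift_energy f (real n *\<^sub>R u) \<le> (\<integral>\<^sup>+y. of_nat n * (\<Sum>j<n. ennreal ((step y j)\<^sup>2)) \<partial>lborel)"
    unfolding shift_energy_def by (rule nn_integral_mono)
  also have "\<dots> = of_nat n * (of_nat n * shift_energy f u)"
    by (simp add: nn_integral_cmult nn_integral_sum step_energy del: sum_ennreal)
  finally show ?thesis by (simp add: power2_eq_square mult.assoc)
qed

text \<open>At \<open>k = 0\<close> the kernel is \<open>0\<close> (division by zero), which is harmless: the difference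
  \<open>f (x + k) - f x\<close> it multiplies vanishes there.\<close>

definition gagliardo_kernel :: "'a::euclidean_space \<Rightarrow> ennreal" where
  "gagliardo_kernel k = ennreal (1 / norm k ^ (DIM('a) + 1))"

lemma borel_measurable_gagliardo_kernel [measurable]: "gagliardo_kernel \<in> borel_measurable borel"
  unfolding gagliardo_kernel_def by measurable

lemma gagliardo_kernel_antimono:
  fixes k :: "'a::euclidean_space"
  assumes "0 < r" "r \<le> norm k"
  shows "gagliardo_kernel k \<le> ennreal (1 / r ^ (DIM('a) + 1))"
  unfolding gagliardo_kernel_def using assms
  by (intro ennreal_leI divide_left_mono power_mono mult_pos_pos zero_less_power) auto

lemma screened_sq_eq:
  "screened_sq \<Theta> f = (\<integral>\<^sup>+x. (\<integral>\<^sup>+k. indicator {k. ereal (norm k) < \<Theta> x} k *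
      (gagliardo_kernel k * ennreal ((f (x + k) - f x)\<^sup>2)) \<partial>lborel) \<partial>lborel)"
  unfolding screened_sq_def gagliardo_kernel_def
  by (simp add: ennreal_mult'[symmetric] divide_inverse mult.commute)

lemma screened_sq_mono:
  assumes "\<And>x. \<Theta> x \<le> \<Theta>' x"
  shows "screened_sq \<Theta> f \<le> screened_sq \<Theta>' f"
  unfolding screened_sq_def using assms
  by (intro nn_integral_mono mult_right_mono) (auto simp: indicator_def order.strict_trans2)

lemma screened_sq_const:
  fixes f :: "'a::euclidean_space \<Rightarrow> real"
  assumes [measurable]: "f \<in> borel_measurable borel"
  shows "screened_sq (\<lambda>_. ereal \<rho>) f
       = (\<integral>\<^sup>+u. indicator (ball 0 \<rho>) u * gagliardo_kernel u * shift_energy f u \<partial>lborel)"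
proof -
  have "screened_sq (\<lambda>_. ereal \<rho>) f = (\<integral>\<^sup>+x. (\<integral>\<^sup>+u. indicator (ball 0 \<rho>) u *
      (gagliardo_kernel u * ennreal ((f (x + u) - f x)\<^sup>2)) \<partial>lborel) \<partial>lborel)"
    unfolding screened_sq_eq by (simp add: ball_def)
  also have "\<dots> = (\<integral>\<^sup>+u. (\<integral>\<^sup>+x. indicator (ball 0 \<rho>) u *
      (gagliardo_kernel u * ennreal ((f (x + u) - f x)\<^sup>2)) \<partial>lborel) \<partial>lborel)"
    using lborel_pair.Fubini[of "\<lambda>(x, u). indicator (ball 0 \<rho>) u *
      (gagliardo_kernel u * ennreal ((f (x + u) - f x)\<^sup>2))"] by simp
  also have "\<dots> = (\<integral>\<^sup>+u. indicator (ball 0 \<rho>) u * gagliardo_kernel u * shift_energy f u \<partial>lborel)"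
    unfolding shift_energy_def by (simp add: nn_integral_cmult mult.assoc)
  finally show ?thesis .
qed

lemma nn_integral_ball_shift_energy_le:
  fixes f :: "'a::euclidean_space \<Rightarrow> real"
  assumes [measurable]: "f \<in> borel_measurable borel"
    and "h > 0" "n \<ge> 1" "D \<le> real n * h"
  shows "(\<integral>\<^sup>+v. indicator (ball 0 D) v * shift_energy f v \<partial>lborel)
       \<le> ennreal (real n ^ (DIM('a) + 2) * h ^ (DIM('a) + 1)) * screened_sq (\<lambda>_. ereal h) f"
proof -
  define c where "c = of_nat (n\<^sup>2) * ennreal (h ^ (DIM('a) + 1))"
  have pointwise: "indicator (ball 0 D) (real n *\<^sub>R u) * shift_energy f (real n *\<^sub>R u)
      \<le> c * (indicator (ball 0 h) u * gagliardo_kernel u * shift_energy f u)" for u :: 'a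
  proof (cases "u \<noteq> 0 \<and> real n * norm u < D")
    case True
    then have "real n * norm u < real n * h"
      using assms(4) by linarith
    then have "norm u < h"
      using \<open>n \<ge> 1\<close> by simp
    then have "norm u ^ (DIM('a) + 1) \<le> h ^ (DIM('a) + 1)"
      by (intro power_mono) auto
    then have "1 \<le> h ^ (DIM('a) + 1) * (1 / norm u ^ (DIM('a) + 1))"
      using True by (simp add: field_simps)
    then have "1 \<le> ennreal (h ^ (DIM('a) + 1)) * gagliardo_kernel u"
      using \<open>h > 0\<close> by (simp add: gagliardo_kernel_def ennreal_mult'[symmetric] ennreal_leI)
    then have "of_nat (n\<^sup>2) * (1 * shift_energy f u)
        \<le> of_nat (n\<^sup>2) * (ennreal (h ^ (DIM('a) + 1)) * gagliardo_kernel u * shift_energy f u)"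
      by (intro mult_left_mono mult_right_mono) auto
    then have "of_nat (n\<^sup>2) * shift_energy f u \<le> c * (gagliardo_kernel u * shift_energy f u)"
      by (simp add: c_def mult_ac)
    then show ?thesis
      using True \<open>norm u < h\<close> shift_energy_scaleR_nat[of f n u] by (simp add: indicator_def)
  qed (auto simp: indicator_def)
  have "(\<integral>\<^sup>+v. indicator (ball 0 D) v * shift_energy f v \<partial>lborel)
      = ennreal (real n ^ DIM('a)) *
        (\<integral>\<^sup>+u. indicator (ball 0 D) (real n *\<^sub>R u) * shift_energy f (real n *\<^sub>R u) \<partial>lborel)"
    using \<open>n \<ge> 1\<close> by (intro nn_integral_lborel_scale) auto
  also have "\<dots> \<le> ennreal (real n ^ DIM('a)) *
      (\<integral>\<^sup>+u. c * (indicator (ball 0 h) u * gagliardo_kernel u * shift_energy f u) \<partial>lborel)"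
    by (intro mult_left_mono nn_integral_mono pointwise) simp
  also have "\<dots> = ennreal (real n ^ DIM('a)) * c * screened_sq (\<lambda>_. ereal h) f"
    by (simp add: nn_integral_cmult screened_sq_const mult.assoc)
  also have "ennreal (real n ^ DIM('a)) * c = ennreal (real n ^ (DIM('a) + 2) * h ^ (DIM('a) + 1))"
    using \<open>h > 0\<close> by (simp add: c_def ennreal_mult' ennreal_of_nat_eq_real_of_nat power_add power2_eq_square mult_ac)
  finally show ?thesis .
qed

lemma ex_dyadic_interval:
  fixes t :: real
  assumes "1 \<le> t"
  shows "\<exists>m::nat. 2 ^ m \<le> t \<and> t < 2 ^ Suc m"
proof -
  define m where "m = nat \<lfloor>log 2 t\<rfloor>"
  have "\<lfloor>log 2 t\<rfloor> = int m"
    using assms by (simp add: m_def)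
  then have "2 powr real m \<le> t \<and> t < 2 powr (real m + 1)"
    using floor_log_eq_powr_iff[of t 2 "int m"] assms by simp
  then show ?thesis
    by (auto simp: powr_realpow[symmetric] powr_add)
qed

lemma nn_integral_gagliardo_kernel_outside_ball:
  assumes "h > 0"
  shows "(\<integral>\<^sup>+v. indicator (- ball (0::'a::euclidean_space) h) v * gagliardo_kernel v \<partial>lborel) < \<infinity>"
proof -
  define d where "d = DIM('a)"
  define u where "u = unit_ball_vol (real d)"
  define F where "F m v = indicator (ball 0 (2 ^ Suc m * h)) v * ennreal (1 / (2 ^ m * h) ^ (d + 1))"
    for m and v :: 'a
  have dyadic_bound: "indicator (- ball 0 h) v * gagliardo_kernel v \<le> (\<Sum>m. F m v)" for v
  proof (cases "h \<le> norm v")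
    case True
    then obtain m :: nat where m: "2 ^ m \<le> norm v / h" "norm v / h < 2 ^ Suc m"
      using ex_dyadic_interval[of "norm v / h"] \<open>h > 0\<close> by auto
    then have shell: "2 ^ m * h \<le> norm v" "norm v < 2 ^ Suc m * h"
      using \<open>h > 0\<close> by (auto simp: field_simps)
    then have "gagliardo_kernel v \<le> ennreal (1 / (2 ^ m * h) ^ (d + 1))"
      unfolding d_def using \<open>h > 0\<close> by (intro gagliardo_kernel_antimono) auto
    then have "indicator (- ball 0 h) v * gagliardo_kernel v \<le> F m v"
      using True shell by (simp add: F_def)
    also have "\<dots> \<le> (\<Sum>m. F m v)"
      using sum_le_suminf[of "\<lambda>m. F m v" "{m}"] by simp
    finally show ?thesis .
  qed simp
  have shell: "(\<integral>\<^sup>+v. F m v \<partial>lborel) = ennreal (u * 2 ^ d / h * (1 / 2) ^ m)" for m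
  proof -
    have "(\<integral>\<^sup>+v. F m v \<partial>lborel) = ennreal (u * (2 ^ Suc m * h) ^ d) * ennreal (1 / (2 ^ m * h) ^ (d + 1))"
      using \<open>h > 0\<close> by (simp add: F_def nn_integral_multc emeasure_ball u_def d_def)
    also have "\<dots> = ennreal (u * 2 ^ d / h * (1 / 2) ^ m)"
      using \<open>h > 0\<close>
      by (simp add: u_def ennreal_mult'[symmetric] power_mult_distrib power_add field_simps)
    finally show ?thesis .
  qed
  have "(\<integral>\<^sup>+v. indicator (- ball (0::'a) h) v * gagliardo_kernel v \<partial>lborel) \<le> (\<integral>\<^sup>+v. (\<Sum>m. F m v) \<partial>lborel)"
    using dyadic_bound by (rule nn_integral_mono)
  also have "\<dots> = (\<Sum>m. \<integral>\<^sup>+v. F m v \<partial>lborel)"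
    by (rule nn_integral_suminf) (simp add: F_def)
  also have "\<dots> = (\<Sum>m. ennreal (u * 2 ^ d / h * (1 / 2) ^ m))"
    by (simp only: shell)
  also have "\<dots> < \<infinity>"
  proof -
    have "summable (\<lambda>m. u * 2 ^ d / h * (1 / 2 :: real) ^ m)"
      by (intro summable_mult summable_geometric) simp
    then have "(\<Sum>m. ennreal (u * 2 ^ d / h * (1 / 2) ^ m)) \<noteq> top"
      using \<open>h > 0\<close> by (intro ennreal_suminf_neq_top) (simp_all add: u_def)
    then show ?thesis
      by (simp add: less_top)
  qed
  finally show ?thesis .
qed

lemma ball_subset_lens:
  fixes x k :: "'a::real_normed_vector"
  assumes "0 < h" "h < r" "r \<le> norm k" "norm k < r + M" "M + 2 * h \<le> D"
  shows "\<exists>p. ball p h \<subseteq> ball x r \<inter> ball (x + k) D"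
proof
  define p where "p = x + ((r - h) / norm k) *\<^sub>R k"
  have "norm k > 0"
    using assms by linarith
  have "dist x p = r - h"
    using \<open>norm k > 0\<close> assms by (simp add: p_def dist_norm)
  moreover have "dist (x + k) p = norm k - (r - h)"
  proof -
    have "(r - h) / norm k \<le> 1"
      using assms \<open>norm k > 0\<close> by (simp add: field_simps)
    have "dist (x + k) p = norm ((1 - (r - h) / norm k) *\<^sub>R k)"
      by (simp add: dist_norm p_def algebra_simps)
    also have "\<dots> = (1 - (r - h) / norm k) * norm k"
      using \<open>(r - h) / norm k \<le> 1\<close> by simp
    also have "\<dots> = norm k - (r - h)"
      using \<open>norm k > 0\<close> by (simp add: field_simps)
    finally show ?thesis .
  qed
  ultimately show "ball p h \<subseteq> ball x r \<inter> ball (x + k) D"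
  proof (intro subsetI)
    fix z
    assume "dist x p = r - h" "dist (x + k) p = norm k - (r - h)" "z \<in> ball p h"
    then have "dist x z < r" "dist (x + k) z < D"
      using assms dist_triangle[of x z p] dist_triangle[of "x + k" z p] by auto
    then show "z \<in> ball x r \<inter> ball (x + k) D"
      by simp
  qed
qed

definition local_energy :: "('a::euclidean_space \<Rightarrow> real) \<Rightarrow> real \<Rightarrow> 'a \<Rightarrow> ennreal" where
  "local_energy f D y = (\<integral>\<^sup>+z. indicator (ball y D) z * ennreal ((f z - f y)\<^sup>2) \<partial>lborel)"

lemma borel_measurable_local_energy [measurable]:
  assumes [measurable]: "f \<in> borel_measurable borel"
  shows "local_energy f D \<in> borel_measurable borel"
  unfolding local_energy_def by measurable

lemma power2_diff_le_via: "(a - b)\<^sup>2 \<le> 2 * (c - b)\<^sup>2 + 2 * (c - a :: real)\<^sup>2"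
  using zero_le_power2[of "c - b + (c - a)"] by (simp add: power2_eq_square algebra_simps)

lemma emeasure_ball_mult_sq_jump_le:
  fixes f :: "'a::euclidean_space \<Rightarrow> real"
  assumes [measurable]: "f \<in> borel_measurable borel"
    and "0 < h" "h < r" "r \<le> norm k" "norm k < r + M" "M + 2 * h \<le> D"
  shows "emeasure lborel (ball (0::'a) h) * ennreal ((f (x + k) - f x)\<^sup>2)
       \<le> 2 * (\<integral>\<^sup>+z. indicator (ball x r) z * indicator (ball (x + k) D) z * ennreal ((f z - f x)\<^sup>2) \<partial>lborel)
         + 2 * local_energy f D (x + k)"
proof -
  define lens :: "'a \<Rightarrow> ennreal" where "lens z = indicator (ball x r) z * indicator (ball (x + k) D) z" for z
  have [measurable]: "lens \<in> borel_measurable borel"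
    unfolding lens_def by measurable
  obtain p where p: "ball p h \<subseteq> ball x r \<inter> ball (x + k) D"
    using ball_subset_lens assms(2-) by blast
  have "emeasure lborel (ball (0::'a) h) = (\<integral>\<^sup>+z. indicator (ball p h) z \<partial>lborel)"
    using \<open>h > 0\<close> by (simp add: emeasure_ball)
  also have "\<dots> \<le> (\<integral>\<^sup>+z. lens z \<partial>lborel)"
    using p by (intro nn_integral_mono) (auto simp: lens_def indicator_def)
  finally have "emeasure lborel (ball (0::'a) h) * ennreal ((f (x + k) - f x)\<^sup>2)
      \<le> (\<integral>\<^sup>+z. lens z \<partial>lborel) * ennreal ((f (x + k) - f x)\<^sup>2)"
    by (rule mult_right_mono) simp
  also have "\<dots> = (\<integral>\<^sup>+z. lens z * ennreal ((f (x + k) - f x)\<^sup>2) \<partial>lborel)"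
    by (rule nn_integral_multc[symmetric]) simp
  also have "\<dots> \<le> (\<integral>\<^sup>+z. 2 * (lens z * ennreal ((f z - f x)\<^sup>2))
      + 2 * (indicator (ball (x + k) D) z * ennreal ((f z - f (x + k))\<^sup>2)) \<partial>lborel)"
  proof (intro nn_integral_mono)
    fix z
    show "lens z * ennreal ((f (x + k) - f x)\<^sup>2) \<le> 2 * (lens z * ennreal ((f z - f x)\<^sup>2))
      + 2 * (indicator (ball (x + k) D) z * ennreal ((f z - f (x + k))\<^sup>2))"
    proof (cases "z \<in> ball x r \<inter> ball (x + k) D")
      case True
      have "ennreal ((f (x + k) - f x)\<^sup>2) \<le> ennreal (2 * (f z - f x)\<^sup>2 + 2 * (f z - f (x + k))\<^sup>2)"
        by (intro ennreal_leI power2_diff_le_via)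
      then show ?thesis
        using True by (simp add: lens_def ennreal_plus ennreal_mult')
    qed (auto simp: lens_def)
  qed
  also have "\<dots> = 2 * (\<integral>\<^sup>+z. lens z * ennreal ((f z - f x)\<^sup>2) \<partial>lborel) + 2 * local_energy f D (x + k)"
    by (simp add: nn_integral_add nn_integral_cmult local_energy_def)
  finally show ?thesis
    by (simp add: lens_def)
qed

lemma nn_integral_lens_energy_le:
  fixes f :: "'a::euclidean_space \<Rightarrow> real"
  assumes [measurable]: "f \<in> borel_measurable borel" and "0 < r" "0 < D"
  shows "(\<integral>\<^sup>+k. indicator (- ball 0 r) k * gagliardo_kernel k *
            (\<integral>\<^sup>+z. indicator (ball x r) z * indicator (ball (x + k) D) z * ennreal ((f z - f x)\<^sup>2) \<partial>lborel) \<partial>lborel)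
     \<le> emeasure lborel (ball (0::'a) D) *
        (\<integral>\<^sup>+k. indicator (ball 0 r) k * (gagliardo_kernel k * ennreal ((f (x + k) - f x)\<^sup>2)) \<partial>lborel)"
proof -
  define c where "c = ennreal (1 / r ^ (DIM('a) + 1))"
  define g :: "'a \<Rightarrow> ennreal" where "g z = indicator (ball x r) z * ennreal ((f z - f x)\<^sup>2)" for z
  have [measurable]: "g \<in> borel_measurable borel"
    unfolding g_def by measurable
  have "(\<integral>\<^sup>+k. indicator (- ball 0 r) k * gagliardo_kernel k *
            (\<integral>\<^sup>+z. indicator (ball x r) z * indicator (ball (x + k) D) z * ennreal ((f z - f x)\<^sup>2) \<partial>lborel) \<partial>lborel)
      \<le> (\<integral>\<^sup>+k. c * (\<integral>\<^sup>+z. indicator (ball (x + k) D) z * g z \<partial>lborel) \<partial>lborel)"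
  proof (rule nn_integral_mono, rule mult_mono)
    fix k :: 'a
    show "indicator (- ball 0 r) k * gagliardo_kernel k \<le> c"
      using \<open>0 < r\<close> gagliardo_kernel_antimono[of r k] by (auto simp: indicator_def c_def)
    show "(\<integral>\<^sup>+z. indicator (ball x r) z * indicator (ball (x + k) D) z * ennreal ((f z - f x)\<^sup>2) \<partial>lborel)
        \<le> (\<integral>\<^sup>+z. indicator (ball (x + k) D) z * g z \<partial>lborel)"
      by (simp add: g_def mult_ac)
  qed simp_all
  also have "\<dots> = c * (\<integral>\<^sup>+z. (\<integral>\<^sup>+k. indicator (ball (x + k) D) z * g z \<partial>lborel) \<partial>lborel)"
    using lborel_pair.Fubini[of "\<lambda>(k, z). indicator (ball (x + k) D) z * g z"]
    by (simp add: nn_integral_cmult)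
  also have "\<dots> = c * (\<integral>\<^sup>+z. emeasure lborel (ball (0::'a) D) * g z \<partial>lborel)"
  proof -
    have "indicator (ball (x + k) D) z = (indicator (ball (z - x) D) k :: ennreal)" for k z :: 'a
      by (simp add: indicator_def dist_norm norm_minus_commute algebra_simps)
    then have "(\<integral>\<^sup>+k. indicator (ball (x + k) D) z * g z \<partial>lborel) = emeasure lborel (ball (0::'a) D) * g z"
      for z :: 'a
      using \<open>0 < D\<close> by (simp add: nn_integral_multc emeasure_ball)
    then show ?thesis
      by simp
  qed
  also have "\<dots> = emeasure lborel (ball (0::'a) D) * (\<integral>\<^sup>+z. c * g z \<partial>lborel)"
    by (simp add: nn_integral_cmult mult.left_commute)
  also have "(\<integral>\<^sup>+z. c * g z \<partial>lborel)
      \<le> (\<integral>\<^sup>+z. indicator (ball 0 r) (z - x) * (gagliardo_kernel (z - x) * ennreal ((f z - f x)\<^sup>2)) \<partial>lborel)"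
  proof (intro nn_integral_mono)
    fix z
    show "c * g z \<le> indicator (ball 0 r) (z - x) * (gagliardo_kernel (z - x) * ennreal ((f z - f x)\<^sup>2))"
    proof (cases "z \<in> ball x r \<and> z \<noteq> x")
      case True
      then have "c \<le> gagliardo_kernel (z - x)"
        using \<open>0 < r\<close> unfolding c_def gagliardo_kernel_def
        by (intro ennreal_leI divide_left_mono power_mono mult_pos_pos zero_less_power)
           (auto simp: dist_norm norm_minus_commute)
      then show ?thesis
        using True by (auto simp: g_def dist_norm norm_minus_commute intro: mult_right_mono)
    qed (auto simp: g_def)
  qed
  also have "\<dots> = (\<integral>\<^sup>+k. indicator (ball 0 r) k * (gagliardo_kernel k * ennreal ((f (x + k) - f x)\<^sup>2)) \<partial>lborel)"
    using nn_integral_lborel_translate[of "\<lambda>z. indicator (ball 0 r) (z - x) *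
      (gagliardo_kernel (z - x) * ennreal ((f z - f x)\<^sup>2))" x] by simp
  finally show ?thesis
    by (simp add: mult_left_mono)
qed

lemma nn_integral_local_energy:
  fixes f :: "'a::euclidean_space \<Rightarrow> real"
  assumes [measurable]: "f \<in> borel_measurable borel"
  shows "(\<integral>\<^sup>+y. local_energy f D y \<partial>lborel) = (\<integral>\<^sup>+v. indicator (ball 0 D) v * shift_energy f v \<partial>lborel)"
proof -
  have "local_energy f D y = (\<integral>\<^sup>+v. indicator (ball 0 D) v * ennreal ((f (y + v) - f y)\<^sup>2) \<partial>lborel)" for y
    using nn_integral_lborel_translate[of "\<lambda>z. indicator (ball y D) z * ennreal ((f z - f y)\<^sup>2)" y]
    by (simp add: local_energy_def indicator_def dist_norm)
  then have "(\<integral>\<^sup>+y. local_energy f D y \<partial>lborel)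
      = (\<integral>\<^sup>+y. (\<integral>\<^sup>+v. indicator (ball 0 D) v * ennreal ((f (y + v) - f y)\<^sup>2) \<partial>lborel) \<partial>lborel)"
    by simp
  also have "\<dots> = (\<integral>\<^sup>+v. (\<integral>\<^sup>+y. indicator (ball 0 D) v * ennreal ((f (y + v) - f y)\<^sup>2) \<partial>lborel) \<partial>lborel)"
    using lborel_pair.Fubini[of "\<lambda>(y, v). indicator (ball 0 D) v * ennreal ((f (y + v) - f y)\<^sup>2)"]
    by simp
  also have "\<dots> = (\<integral>\<^sup>+v. indicator (ball 0 D) v * shift_energy f v \<partial>lborel)"
    by (simp add: shift_energy_def nn_integral_cmult)
  finally show ?thesis .
qed

lemma annulus_energy_le:
  fixes f :: "'a::euclidean_space \<Rightarrow> real"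
  assumes [measurable]: "f \<in> borel_measurable borel"
    and "0 < h" "h < r" "M + 2 * h \<le> D" "0 < D"
  shows "emeasure lborel (ball (0::'a) h) *
      (\<integral>\<^sup>+k. indicator {k. r \<le> norm k \<and> norm k < r + M} k * (gagliardo_kernel k * ennreal ((f (x + k) - f x)\<^sup>2)) \<partial>lborel)
    \<le> 2 * (emeasure lborel (ball (0::'a) D) *
          (\<integral>\<^sup>+k. indicator (ball 0 r) k * (gagliardo_kernel k * ennreal ((f (x + k) - f x)\<^sup>2)) \<partial>lborel))
      + 2 * (\<integral>\<^sup>+k. indicator (- ball 0 h) k * gagliardo_kernel k * local_energy f D (x + k) \<partial>lborel)"
proof -
  define lens_energy where "lens_energy k =
    (\<integral>\<^sup>+z. indicator (ball x r) z * indicator (ball (x + k) D) z * ennreal ((f z - f x)\<^sup>2) \<partial>lborel)" for k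
  have [measurable]: "lens_energy \<in> borel_measurable borel"
    unfolding lens_energy_def by measurable
  have "emeasure lborel (ball (0::'a) h) *
      (\<integral>\<^sup>+k. indicator {k. r \<le> norm k \<and> norm k < r + M} k * (gagliardo_kernel k * ennreal ((f (x + k) - f x)\<^sup>2)) \<partial>lborel)
    = (\<integral>\<^sup>+k. indicator {k. r \<le> norm k \<and> norm k < r + M} k * gagliardo_kernel k *
          (emeasure lborel (ball (0::'a) h) * ennreal ((f (x + k) - f x)\<^sup>2)) \<partial>lborel)"
    by (subst nn_integral_cmult[symmetric]) (simp_all add: mult_ac)
  also have "\<dots> \<le> (\<integral>\<^sup>+k. 2 * (indicator (- ball 0 r) k * gagliardo_kernel k * lens_energy k)
      + 2 * (indicator (- ball 0 h) k * gagliardo_kernel k * local_energy f D (x + k)) \<partial>lborel)"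
  proof (intro nn_integral_mono)
    fix k :: 'a
    show "indicator {k. r \<le> norm k \<and> norm k < r + M} k * gagliardo_kernel k *
          (emeasure lborel (ball (0::'a) h) * ennreal ((f (x + k) - f x)\<^sup>2))
      \<le> 2 * (indicator (- ball 0 r) k * gagliardo_kernel k * lens_energy k)
        + 2 * (indicator (- ball 0 h) k * gagliardo_kernel k * local_energy f D (x + k))"
    proof (cases "r \<le> norm k \<and> norm k < r + M")
      case True
      then have "gagliardo_kernel k * (emeasure lborel (ball (0::'a) h) * ennreal ((f (x + k) - f x)\<^sup>2))
          \<le> gagliardo_kernel k * (2 * lens_energy k + 2 * local_energy f D (x + k))"
        unfolding lens_energy_def using assms
        by (intro mult_left_mono emeasure_ball_mult_sq_jump_le) auto
      then show ?thesis
        using True \<open>h < r\<close> by (simp add: distrib_left mult_ac)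
    qed simp
  qed
  also have "\<dots> = 2 * (\<integral>\<^sup>+k. indicator (- ball 0 r) k * gagliardo_kernel k * lens_energy k \<partial>lborel)
      + 2 * (\<integral>\<^sup>+k. indicator (- ball 0 h) k * gagliardo_kernel k * local_energy f D (x + k) \<partial>lborel)"
    by (simp add: nn_integral_add nn_integral_cmult)
  also have "\<dots> \<le> 2 * (emeasure lborel (ball (0::'a) D) *
          (\<integral>\<^sup>+k. indicator (ball 0 r) k * (gagliardo_kernel k * ennreal ((f (x + k) - f x)\<^sup>2)) \<partial>lborel))
      + 2 * (\<integral>\<^sup>+k. indicator (- ball 0 h) k * gagliardo_kernel k * local_energy f D (x + k) \<partial>lborel)"
    unfolding lens_energy_def using assms
    by (intro add_right_mono mult_left_mono nn_integral_lens_energy_le) auto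
  finally show ?thesis .
qed

lemma screened_sq_le_add_annulus:
  fixes f :: "'a::euclidean_space \<Rightarrow> real"
  assumes [measurable]: "f \<in> borel_measurable borel" "\<Theta>' \<in> borel_measurable borel"
    and "AE x in lborel. \<Theta> x \<le> \<Theta>' x + ereal M"
  shows "screened_sq \<Theta> f \<le> screened_sq \<Theta>' f +
    (\<integral>\<^sup>+x. (\<integral>\<^sup>+k. indicator {k. \<Theta>' x \<le> ereal (norm k) \<and> ereal (norm k) < \<Theta>' x + ereal M} k *
        (gagliardo_kernel k * ennreal ((f (x + k) - f x)\<^sup>2)) \<partial>lborel) \<partial>lborel)"
proof -
  define q where "q x k = gagliardo_kernel k * ennreal ((f (x + k) - f x)\<^sup>2)" for x k :: 'a
  have [measurable]: "(\<lambda>(x, k). q x k) \<in> borel_measurable (borel \<Otimes>\<^sub>M borel)"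
    unfolding q_def by measurable
  have "screened_sq \<Theta> f \<le> (\<integral>\<^sup>+x. (\<integral>\<^sup>+k. indicator {k. ereal (norm k) < \<Theta>' x} k * q x k
      + indicator {k. \<Theta>' x \<le> ereal (norm k) \<and> ereal (norm k) < \<Theta>' x + ereal M} k * q x k \<partial>lborel) \<partial>lborel)"
    unfolding screened_sq_eq q_def[symmetric]
    using assms(3)
    by (intro nn_integral_mono_AE)
       (elim AE_mp, intro AE_I2 impI nn_integral_mono, auto simp: indicator_def not_less)
  also have "\<dots> = screened_sq \<Theta>' f +
    (\<integral>\<^sup>+x. (\<integral>\<^sup>+k. indicator {k. \<Theta>' x \<le> ereal (norm k) \<and> ereal (norm k) < \<Theta>' x + ereal M} k * q x k \<partial>lborel) \<partial>lborel)"
    by (simp add: nn_integral_add screened_sq_eq q_def)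
  finally show ?thesis
    by (simp add: q_def)
qed

lemma annulus_integral_le:
  fixes f :: "'a::euclidean_space \<Rightarrow> real"
  assumes [measurable]: "f \<in> borel_measurable borel" "\<sigma> \<in> borel_measurable borel"
    and "0 < h" "\<And>x. ereal h < \<sigma> x"
    and "M + 2 * h \<le> D" "0 < D" "n \<ge> 1" "D \<le> real n * h"
  shows "emeasure lborel (ball (0::'a) h) *
      (\<integral>\<^sup>+x. (\<integral>\<^sup>+k. indicator {k. \<sigma> x \<le> ereal (norm k) \<and> ereal (norm k) < \<sigma> x + ereal M} k *
        (gagliardo_kernel k * ennreal ((f (x + k) - f x)\<^sup>2)) \<partial>lborel) \<partial>lborel)
    \<le> 2 * (emeasure lborel (ball (0::'a) D) +
        (\<integral>\<^sup>+v. indicator (- ball (0::'a) h) v * gagliardo_kernel v \<partial>lborel) *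
        ennreal (real n ^ (DIM('a) + 2) * h ^ (DIM('a) + 1))) * screened_sq \<sigma> f"
proof -
  define q where "q x k = gagliardo_kernel k * ennreal ((f (x + k) - f x)\<^sup>2)" for x k :: 'a
  have [measurable]: "(\<lambda>(x, k). q x k) \<in> borel_measurable (borel \<Otimes>\<^sub>M borel)"
    unfolding q_def by measurable
  define tail where "tail x = (\<integral>\<^sup>+k. indicator (- ball 0 h) k * gagliardo_kernel k * local_energy f D (x + k) \<partial>lborel)"
    for x :: 'a
  have [measurable]: "tail \<in> borel_measurable borel"
    unfolding tail_def by measurable
  have annulus_at: "emeasure lborel (ball (0::'a) h) *
      (\<integral>\<^sup>+k. indicator {k. \<sigma> x \<le> ereal (norm k) \<and> ereal (norm k) < \<sigma> x + ereal M} k * q x k \<partial>lborel)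
    \<le> 2 * (emeasure lborel (ball (0::'a) D) *
        (\<integral>\<^sup>+k. indicator {k. ereal (norm k) < \<sigma> x} k * q x k \<partial>lborel)) + 2 * tail x" for x
  proof (cases "\<sigma> x")
    case (real r)
    then have "h < r"
      using assms(4)[of x] by simp
    with real show ?thesis
      using annulus_energy_le[of f h r M D x] assms
      by (simp add: q_def tail_def ball_def dist_norm)
  next
    case PInf
    then show ?thesis
      by simp
  next
    case MInf
    then show ?thesis
      using assms(4)[of x] by simp
  qed
  have "emeasure lborel (ball (0::'a) h) *
      (\<integral>\<^sup>+x. (\<integral>\<^sup>+k. indicator {k. \<sigma> x \<le> ereal (norm k) \<and> ereal (norm k) < \<sigma> x + ereal M} k * q x k \<partial>lborel) \<partial>lborel)
    \<le> (\<integral>\<^sup>+x. 2 * (emeasure lborel (ball (0::'a) D) *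
        (\<integral>\<^sup>+k. indicator {k. ereal (norm k) < \<sigma> x} k * q x k \<partial>lborel)) + 2 * tail x \<partial>lborel)"
    by (subst nn_integral_cmult[symmetric]) (auto intro!: nn_integral_mono annulus_at)
  also have "\<dots> = 2 * (emeasure lborel (ball (0::'a) D) * screened_sq \<sigma> f)
      + 2 * ((\<integral>\<^sup>+v. indicator (- ball (0::'a) h) v * gagliardo_kernel v \<partial>lborel) *
             (\<integral>\<^sup>+y. local_energy f D y \<partial>lborel))"
    using nn_integral_lborel_convolution[of "\<lambda>k. indicator (- ball 0 h) k * gagliardo_kernel k" "local_energy f D"]
    by (simp add: tail_def nn_integral_add nn_integral_cmult screened_sq_eq q_def)
  also have "\<dots> \<le> 2 * (emeasure lborel (ball (0::'a) D) * screened_sq \<sigma> f)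
      + 2 * ((\<integral>\<^sup>+v. indicator (- ball (0::'a) h) v * gagliardo_kernel v \<partial>lborel) *
             (ennreal (real n ^ (DIM('a) + 2) * h ^ (DIM('a) + 1)) * screened_sq \<sigma> f))"
  proof (intro add_left_mono mult_left_mono)
    have "screened_sq (\<lambda>_. ereal h) f \<le> screened_sq \<sigma> f"
      using assms(4) by (intro screened_sq_mono less_imp_le)
    then show "(\<integral>\<^sup>+y. local_energy f D y \<partial>lborel)
        \<le> ennreal (real n ^ (DIM('a) + 2) * h ^ (DIM('a) + 1)) * screened_sq \<sigma> f"
      unfolding nn_integral_local_energy[OF assms(1)] using assms
      by (intro order.trans[OF nn_integral_ball_shift_energy_le]) (auto intro: mult_left_mono)
  qed simp_all
  finally show ?thesis
    by (simp add: q_def distrib_left distrib_right mult_ac)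
qed

lemma screened_sq_comparison:
  fixes h M :: real
  assumes "0 < h"
  obtains K :: real where "0 \<le> K"
    and "\<And>(\<sigma>1 :: 'a::euclidean_space \<Rightarrow> ereal) \<sigma>2 (f :: 'a \<Rightarrow> real). f \<in> borel_measurable borel \<Longrightarrow>
      \<sigma>2 \<in> borel_measurable borel \<Longrightarrow> (\<And>x. ereal h < \<sigma>2 x) \<Longrightarrow>
      AE x in lborel. \<sigma>1 x \<le> \<sigma>2 x + ereal M \<Longrightarrow>
      screened_sq \<sigma>1 f \<le> ennreal K * screened_sq \<sigma>2 f"
proof
  define D where "D = \<bar>M\<bar> + 2 * h"
  define n where "n = nat \<lceil>D / h\<rceil>"
  define c where "c = emeasure lborel (ball (0::'a) h)"
  define A where "A = 2 * (emeasure lborel (ball (0::'a) D) +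
    (\<integral>\<^sup>+v. indicator (- ball (0::'a) h) v * gagliardo_kernel v \<partial>lborel) *
    ennreal (real n ^ (DIM('a) + 2) * h ^ (DIM('a) + 1)))"
  have D: "M + 2 * h \<le> D" "0 < D"
    using \<open>0 < h\<close> by (auto simp: D_def)
  have "0 < D / h" "D / h \<le> real n"
    using \<open>0 < h\<close> D real_nat_ceiling_ge[of "D / h"] by (auto simp: n_def)
  then have "0 < real n"
    by linarith
  then have n: "n \<ge> 1" "D \<le> real n * h"
    using \<open>0 < h\<close> \<open>D / h \<le> real n\<close> by (simp_all add: pos_divide_le_eq)
  have c: "c \<noteq> 0" "c \<noteq> top"
    using \<open>0 < h\<close> by (simp_all add: c_def emeasure_ball ennreal_eq_0_iff not_le)
  have "A < top"
    using \<open>0 < D\<close> nn_integral_gagliardo_kernel_outside_ball[OF \<open>0 < h\<close>, where 'a='a]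
    by (simp add: A_def emeasure_ball ennreal_mult_less_top)
  then have finite: "1 + A / c \<noteq> top"
    using c by (simp add: ennreal_divide_eq_top_iff)
  show "0 \<le> enn2real (1 + A / c)"
    by simp
  fix \<sigma>1 \<sigma>2 :: "'a \<Rightarrow> ereal" and f :: "'a \<Rightarrow> real"
  assume [measurable]: "f \<in> borel_measurable borel" "\<sigma>2 \<in> borel_measurable borel"
    and above_h: "\<And>x. ereal h < \<sigma>2 x" and close: "AE x in lborel. \<sigma>1 x \<le> \<sigma>2 x + ereal M"
  define E where "E = (\<integral>\<^sup>+x. (\<integral>\<^sup>+k. indicator {k. \<sigma>2 x \<le> ereal (norm k) \<and> ereal (norm k) < \<sigma>2 x + ereal M} k *
      (gagliardo_kernel k * ennreal ((f (x + k) - f x)\<^sup>2)) \<partial>lborel) \<partial>lborel)"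
  have "c * E \<le> A * screened_sq \<sigma>2 f"
    unfolding c_def E_def A_def using \<open>0 < h\<close> above_h D n
    by (intro annulus_integral_le) auto
  then have "E \<le> A / c * screened_sq \<sigma>2 f"
    using c divide_right_mono_ennreal[of "c * E" "A * screened_sq \<sigma>2 f" c]
    by (simp add: ennreal_mult_divide_eq ennreal_times_divide mult.commute)
  moreover have "screened_sq \<sigma>1 f \<le> screened_sq \<sigma>2 f + E"
    unfolding E_def using close by (intro screened_sq_le_add_annulus) auto
  ultimately have "screened_sq \<sigma>1 f \<le> (1 + A / c) * screened_sq \<sigma>2 f"
    by (simp add: distrib_right add_left_mono order_trans)
  then show "screened_sq \<sigma>1 f \<le> ennreal (enn2real (1 + A / c)) * screened_sq \<sigma>2 f"
    using finite by (simp only: ennreal_enn2real_if if_False)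
qed

lemma screened_norm_le_of_screened_sq_le:
  assumes "screened_sq \<Theta> f \<le> ennreal K * screened_sq \<Theta>' f" "0 \<le> K"
  shows "screened_norm \<Theta> f \<le> ennreal (sqrt K) * screened_norm \<Theta>' f"
proof (cases "screened_sq \<Theta>' f = \<infinity>")
  case True
  show ?thesis
  proof (cases "K = 0")
    case True
    then show ?thesis
      using assms(1) by (simp add: screened_norm_def)
  next
    case False
    then show ?thesis
      using \<open>screened_sq \<Theta>' f = \<infinity>\<close> \<open>0 \<le> K\<close> by (simp add: screened_norm_def ennreal_mult_top)
  qed
next
  case False
  then have "ennreal K * screened_sq \<Theta>' f < top"
    by (simp add: ennreal_mult_less_top less_top)
  then have "screened_sq \<Theta> f \<noteq> \<infinity>"
    "enn2real (screened_sq \<Theta> f) \<le> K * enn2real (screened_sq \<Theta>' f)"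
    using assms enn2real_mono[OF assms(1)] by (auto simp: enn2real_mult)
  then have "ennreal (sqrt (enn2real (screened_sq \<Theta> f)))
      \<le> ennreal (sqrt K * sqrt (enn2real (screened_sq \<Theta>' f)))"
    by (simp add: ennreal_leI flip: real_sqrt_mult)
  then show ?thesis
    using False \<open>screened_sq \<Theta> f \<noteq> \<infinity>\<close> \<open>0 \<le> K\<close> by (simp add: screened_norm_def ennreal_mult)
qed

lemma borel_measurable_lsc_ereal:
  "lsc_ereal (\<sigma> :: 'a::euclidean_space \<Rightarrow> ereal) \<Longrightarrow> \<sigma> \<in> borel_measurable borel"
  unfolding lsc_ereal_def by (intro borel_measurableI_greater) auto

theorem proposition3p2:
  fixes h M :: real
  assumes "h > 0"
  shows "\<exists>C::real. C \<ge> 0 \<and>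
    (\<forall>(\<sigma>1::'a::euclidean_space \<Rightarrow> ereal) \<sigma>2.
       lsc_ereal \<sigma>1 \<and> lsc_ereal \<sigma>2 \<and>
       (\<forall>x. \<sigma>1 x > 0) \<and> (\<forall>x. \<sigma>2 x > 0) \<and>
       (INF x. min (\<sigma>1 x) (\<sigma>2 x)) > ereal h \<and>
       (AE x in lborel. \<sigma>1 x \<le> \<sigma>2 x + ereal M \<and> \<sigma>2 x \<le> \<sigma>1 x + ereal M)
       \<longrightarrow> (\<forall>f \<in> screened_space \<sigma>2.
              screened_norm \<sigma>1 f \<le> ennreal C * screened_norm \<sigma>2 f))"
proof -
  obtain K :: real where "0 \<le> K" and comparison:
    "\<And>(\<sigma>1 :: 'a \<Rightarrow> ereal) \<sigma>2 f. f \<in> borel_measurable borel \<Longrightarrow> \<sigma>2 \<in> borel_measurable borel \<Longrightarrow>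
      (\<And>x. ereal h < \<sigma>2 x) \<Longrightarrow> AE x in lborel. \<sigma>1 x \<le> \<sigma>2 x + ereal M \<Longrightarrow>
      screened_sq \<sigma>1 f \<le> ennreal K * screened_sq \<sigma>2 f"
    using screened_sq_comparison[of h M] \<open>h > 0\<close> by blast
  show ?thesis
  proof (intro exI[of _ "sqrt K"] conjI allI impI ballI)
    show "0 \<le> sqrt K"
      using \<open>0 \<le> K\<close> by simp
    fix \<sigma>1 \<sigma>2 :: "'a \<Rightarrow> ereal" and f
    assume hyps: "lsc_ereal \<sigma>1 \<and> lsc_ereal \<sigma>2 \<and> (\<forall>x. \<sigma>1 x > 0) \<and> (\<forall>x. \<sigma>2 x > 0) \<and>
       (INF x. min (\<sigma>1 x) (\<sigma>2 x)) > ereal h \<and>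
       (AE x in lborel. \<sigma>1 x \<le> \<sigma>2 x + ereal M \<and> \<sigma>2 x \<le> \<sigma>1 x + ereal M)"
      and "f \<in> screened_space \<sigma>2"
    have "ereal h < \<sigma>2 x" for x
      using hyps INF_lower[of x UNIV "\<lambda>x. min (\<sigma>1 x) (\<sigma>2 x)"] by (auto simp: min_le_iff_disj)
    moreover have "AE x in lborel. \<sigma>1 x \<le> \<sigma>2 x + ereal M"
      using hyps by (auto elim: AE_mp)
    moreover have "f \<in> borel_measurable borel"
      using \<open>f \<in> screened_space \<sigma>2\<close> by (simp add: screened_space_def L2_loc_def)
    ultimately show "screened_norm \<sigma>1 f \<le> ennreal (sqrt K) * screened_norm \<sigma>2 f"
      using hyps \<open>0 \<le> K\<close>
      by (intro screened_norm_le_of_screened_sq_le comparison borel_measurable_lsc_ereal) auto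
  qed
qed

end
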